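(* Let $T\in RB(n)$ have strictly positive edge lengths satisfying (MC), and let $l_{\max}=\max_e l(e)$. Let $i$ be a leaf, and let $e_h,\dots,e_0$ be the edges of the path from the root to $i$, where $e_0$ is the pendant edge at $i$ and $e_h$ is incident with the root. Write $l_j=l(e_j)$, and let $n_j$ be the number of leaves descended from the endpoint of $e_j$ farther from the root. Then for every $1\le j\le h$, $$n_j \;\geq\; 2^{\lceil \sum_{k=0}^{j-1} l_k / l_{\max}\rceil}.$$
   Context: $RB(n)$ is the set of rooted binary phylogenetic trees on leaf set $[n]=\{1,\dots,n\}$: rooted trees in which every non-leaf vertex has out-degree exactly 2 and the leaves are labelled bijectively by $[n]$. (MC) is the condition that the sum of edge lengths from the root to each leaf is the same for all leaves. *)

theory Defs
  imports Complex_Main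
begin

text \<open>Rooted binary phylogenetic trees with edge lengths. An internal vertex has
exactly two children; each child is paired with the length of the edge leading to it.\<close>
datatype ltree = Leaf nat | Node real ltree real ltree

fun leaves :: "ltree \<Rightarrow> nat list" where
  "leaves (Leaf a) = [a]"
| "leaves (Node l1 t1 l2 t2) = leaves t1 @ leaves t2"

fun edge_lengths :: "ltree \<Rightarrow> real list" where
  "edge_lengths (Leaf a) = []"
| "edge_lengths (Node l1 t1 l2 t2) = l1 # l2 # edge_lengths t1 @ edge_lengths t2"

definition RB :: "nat \<Rightarrow> ltree set" where
  "RB n = {T. distinct (leaves T) \<and> set (leaves T) = {1..n}}"

text \<open>Edges on the path from the root to leaf i, listed from the root downwards;
each edge is given as (length, subtree hanging below its lower endpoint).\<close>
fun path_to :: "ltree \<Rightarrow> nat \<Rightarrow> (real \<times> ltree) list" where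
  "path_to (Leaf a) i = []"
| "path_to (Node l1 t1 l2 t2) i =
     (if i \<in> set (leaves t1) then (l1, t1) # path_to t1 i
      else if i \<in> set (leaves t2) then (l2, t2) # path_to t2 i else [])"

definition root_dist :: "ltree \<Rightarrow> nat \<Rightarrow> real" where
  "root_dist T i = (\<Sum>e\<leftarrow>path_to T i. fst e)"

definition MC :: "ltree \<Rightarrow> bool" where
  "MC T \<longleftrightarrow> (\<forall>i\<in>set (leaves T). \<forall>k\<in>set (leaves T). root_dist T i = root_dist T k)"

definition positive_lengths :: "ltree \<Rightarrow> bool" where
  "positive_lengths T \<longleftrightarrow> (\<forall>x\<in>set (edge_lengths T). x > 0)"

definition lmax :: "ltree \<Rightarrow> real" where
  "lmax T = Max (set (edge_lengths T))"

end

theory Submission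
  imports Defs
begin

text \<open>If every leaf of a binary tree lies at distance \<open>h\<close> from the root and no edge is longer
than \<open>L\<close>, then both child subtrees have all their leaves at a common distance at least \<open>h - L\<close>
from their roots. Since \<open>\<lceil>(h - L) / L\<rceil> = \<lceil>h / L\<rceil> - 1\<close>, induction on the tree gives at least
\<open>2 powr \<lceil>h / L\<rceil>\<close> leaves. The subtree below the edge \<open>e\<^sub>j\<close> of the root-to-\<open>i\<close> path inherits
(MC), and its leaves lie at distance \<open>l\<^sub>0 + \<dots> + l\<^sub>j\<^sub>-\<^sub>1\<close> from its root.\<close>

fun subtrees :: "ltree \<Rightarrow> ltree set" where
  "subtrees (Leaf a) = {Leaf a}"
| "subtrees (Node l1 t1 l2 t2) = insert (Node l1 t1 l2 t2) (subtrees t1 \<union> subtrees t2)"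

lemma self_in_subtrees: "t \<in> subtrees t"
  by (cases t) auto

lemma root_dist_Leaf: "root_dist (Leaf a) k = 0"
  by (simp add: root_dist_def)

lemma root_dist_Node_left:
  "k \<in> set (leaves t1) \<Longrightarrow> root_dist (Node l1 t1 l2 t2) k = l1 + root_dist t1 k"
  by (simp add: root_dist_def)

lemma root_dist_Node_right:
  "distinct (leaves (Node l1 t1 l2 t2)) \<Longrightarrow> k \<in> set (leaves t2) \<Longrightarrow>
   root_dist (Node l1 t1 l2 t2) k = l2 + root_dist t2 k"
  by (auto simp add: root_dist_def)

lemma MC_NodeD:
  assumes "MC (Node l1 t1 l2 t2)" "distinct (leaves (Node l1 t1 l2 t2))"
  shows "MC t1" "MC t2"
proof -
  show "MC t1"
    unfolding MC_def
  proof (intro ballI)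
    fix a b assume "a \<in> set (leaves t1)" "b \<in> set (leaves t1)"
    with assms show "root_dist t1 a = root_dist t1 b"
      unfolding MC_def by (metis UnI1 add_left_cancel leaves.simps(2) set_append root_dist_Node_left)
  qed
  show "MC t2"
    unfolding MC_def
  proof (intro ballI)
    fix a b assume "a \<in> set (leaves t2)" "b \<in> set (leaves t2)"
    with assms show "root_dist t2 a = root_dist t2 b"
      unfolding MC_def by (metis UnI2 add_left_cancel leaves.simps(2) set_append root_dist_Node_right)
  qed
qed

lemma distinct_leaves_subtree:
  "S \<in> subtrees T \<Longrightarrow> distinct (leaves T) \<Longrightarrow> distinct (leaves S)"
  by (induction T) auto

lemma edge_lengths_subtree:
  "S \<in> subtrees T \<Longrightarrow> set (edge_lengths S) \<subseteq> set (edge_lengths T)"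
  by (induction T) auto

lemma MC_subtree:
  "S \<in> subtrees T \<Longrightarrow> distinct (leaves T) \<Longrightarrow> MC T \<Longrightarrow> MC S"
proof (induction T)
  case (Node l1 t1 l2 t2)
  then show ?case using MC_NodeD[of l1 t1 l2 t2] by auto
qed simp

lemma path_to_nth_subtree:
  assumes "i \<in> set (leaves T)" "q < length (path_to T i)"
  defines "S \<equiv> snd (path_to T i ! q)"
  shows "S \<in> subtrees T \<and> i \<in> set (leaves S) \<and> path_to S i = drop (Suc q) (path_to T i)"
  unfolding S_def using assms(1,2)
proof (induction T arbitrary: q)
  case (Node l1 t1 l2 t2)
  then show ?case
    by (cases q) (auto simp: self_in_subtrees)
qed simp

lemma ceiling_divide_diff_ge:
  fixes h l L :: real
  assumes "l \<le> L" "0 < L"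
  shows "\<lceil>h / L\<rceil> - 1 \<le> \<lceil>(h - l) / L\<rceil>"
proof -
  have "h / L - 1 \<le> (h - l) / L"
    using assms by (simp add: field_simps)
  then show ?thesis
    by (metis ceiling_diff_one ceiling_mono)
qed

lemma two_powr_ceiling_le_add:
  fixes h l1 l2 L a b :: real
  assumes "2 powr \<lceil>(h - l1) / L\<rceil> \<le> a" "2 powr \<lceil>(h - l2) / L\<rceil> \<le> b"
    and "l1 \<le> L" "l2 \<le> L" "0 < L"
  shows "2 powr \<lceil>h / L\<rceil> \<le> a + b"
proof -
  define c where "c = \<lceil>h / L\<rceil> - 1"
  have "c \<le> \<lceil>(h - l1) / L\<rceil>" "c \<le> \<lceil>(h - l2) / L\<rceil>"
    unfolding c_def using assms(3-5) by (simp_all only: ceiling_divide_diff_ge)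
  then have "2 powr c \<le> 2 powr \<lceil>(h - l1) / L\<rceil>" "2 powr c \<le> 2 powr \<lceil>(h - l2) / L\<rceil>"
    by simp_all
  moreover have "2 powr \<lceil>h / L\<rceil> = 2 powr c + 2 powr c"
    by (simp add: c_def powr_add[symmetric] powr_diff)
  ultimately show ?thesis
    using assms(1,2) by linarith
qed

lemma two_powr_ceiling_le_length_leaves:
  assumes "distinct (leaves S)" "\<forall>x\<in>set (edge_lengths S). x \<le> L" "0 < L"
    and "\<forall>k\<in>set (leaves S). root_dist S k = h"
  shows "2 powr \<lceil>h / L\<rceil> \<le> real (length (leaves S))"
  using assms
proof (induction S arbitrary: h)
  case (Leaf a)
  then have "h = 0" by (simp add: root_dist_Leaf)
  then show ?case by simp
next
  case (Node l1 t1 l2 t2)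
  have "\<forall>k\<in>set (leaves t1). root_dist t1 k = h - l1"
  proof
    fix k assume "k \<in> set (leaves t1)"
    then show "root_dist t1 k = h - l1"
      using Node.prems(4) root_dist_Node_left[of k t1 l1 l2 t2] by simp
  qed
  then have "2 powr \<lceil>(h - l1) / L\<rceil> \<le> real (length (leaves t1))"
    using Node.IH(1) Node.prems(1-3) by simp
  moreover have "\<forall>k\<in>set (leaves t2). root_dist t2 k = h - l2"
  proof
    fix k assume "k \<in> set (leaves t2)"
    then show "root_dist t2 k = h - l2"
      using Node.prems(4) root_dist_Node_right[OF Node.prems(1)] by fastforce
  qed
  then have "2 powr \<lceil>(h - l2) / L\<rceil> \<le> real (length (leaves t2))"
    using Node.IH(2) Node.prems(1-3) by simp
  ultimately show ?case
    using two_powr_ceiling_le_add Node.prems(2,3) by simp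
qed

lemma sum_lessThan_rev_nth:
  fixes f :: "'a \<Rightarrow> 'b::comm_monoid_add"
  assumes "j \<le> length xs"
  shows "(\<Sum>k<j. f (rev xs ! k)) = sum_list (map f (drop (length xs - j) xs))"
proof -
  have "(\<Sum>k<j. f (rev xs ! k)) = sum_list (map f (take j (rev xs)))"
    using assms by (simp add: sum_list_sum_nth atLeast0LessThan)
  then show ?thesis
    by (simp add: take_rev rev_map[symmetric])
qed

lemma le_lmax: "x \<in> set (edge_lengths T) \<Longrightarrow> x \<le> lmax T"
  by (simp add: lmax_def)

lemma lmax_pos: "positive_lengths T \<Longrightarrow> edge_lengths T \<noteq> [] \<Longrightarrow> 0 < lmax T"
  by (metis le_lmax less_le_trans list.set_sel(1) positive_lengths_def)

lemma edge_lengths_nonempty_if_path_to: "path_to T i \<noteq> [] \<Longrightarrow> edge_lengths T \<noteq> []"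
  by (cases T) auto

theorem mainTheorem4:
  fixes T :: ltree and n i :: nat
  assumes "T \<in> RB n"
    and "positive_lengths T"
    and "MC T"
    and "i \<in> set (leaves T)"
  defines "p \<equiv> rev (path_to T i)"
  shows "\<forall>j. 1 \<le> j \<and> j < length p \<longrightarrow>
           (2::real) powr real_of_int \<lceil>(\<Sum>k<j. fst (p ! k)) / lmax T\<rceil>
             \<le> real (length (leaves (snd (p ! j))))"
proof (intro allI impI)
  fix j assume j: "1 \<le> j \<and> j < length p"
  define P where "P = path_to T i"
  define q where "q = length P - Suc j"
  define S where "S = snd (P ! q)"
  have q: "q < length P" "length P - j = Suc q"
    using j by (auto simp: p_def P_def q_def)
  have distinct: "distinct (leaves T)"
    using assms(1) by (simp add: RB_def)
  have S: "S \<in> subtrees T" "i \<in> set (leaves S)" "path_to S i = drop (Suc q) P"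
    using path_to_nth_subtree[OF assms(4) q(1)[unfolded P_def]] by (simp_all add: S_def P_def)
  have "snd (p ! j) = S"
    using j by (simp add: p_def P_def S_def q_def rev_nth)
  moreover have "(\<Sum>k<j. fst (p ! k)) = root_dist S i"
    using j q(2) S(3) by (simp add: p_def P_def sum_lessThan_rev_nth root_dist_def)
  moreover have "0 < lmax T"
  proof -
    have "path_to T i \<noteq> []"
      using q(1) by (auto simp: P_def)
    then show ?thesis
      using assms(2) lmax_pos edge_lengths_nonempty_if_path_to by blast
  qed
  moreover have "\<forall>x\<in>set (edge_lengths S). x \<le> lmax T"
    using edge_lengths_subtree[OF S(1)] le_lmax by blast
  moreover have "\<forall>k\<in>set (leaves S). root_dist S k = root_dist S i"
    using MC_subtree[OF S(1) distinct assms(3)] S(2) unfolding MC_def by blast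
  ultimately show "(2::real) powr real_of_int \<lceil>(\<Sum>k<j. fst (p ! k)) / lmax T\<rceil>
             \<le> real (length (leaves (snd (p ! j))))"
    by (metis two_powr_ceiling_le_length_leaves distinct_leaves_subtree[OF S(1) distinct])
qed

end
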